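(* Suppose the constraint qualification below holds, let $\{(x^k,y^k,z^k)\}$ be generated by Algorithm G-ADMM-M with parameters $\sigma>0$, $\rho\in(0,2)$, and let $(\bar x,\bar y,\bar z)\in\mathbb{W}^*$. Then for every integer $k>1$, $$\sigma(2-\rho)\|\mathcal{A}^*x^k+\mathcal{B}^*y^k-c\|^2\ \ge\ \sigma(2-\rho)\|\mathcal{A}^*x^{k+1}+\mathcal{B}^*y^k-c\|^2+\frac{(2-\rho)^2}{\rho}\|x^{k+1}-x^k\|^2_{\widehat\Sigma_{f_1}+\mathcal S+\sigma\mathcal{A}\mathcal{A}^*}-(2-\rho)\|\widetilde x^k-x^k\|^2_{\widehat\Sigma_{f_1}+\mathcal S}.$$
   Context: Let $\mathbb{X},\mathbb{Y},\mathbb{Z}$ be finite-dimensional real Euclidean spaces with inner product $\langle\cdot,\cdot\rangle$ and induced norm $\|\cdot\|$. For a self-adjoint positive semidefinite linear operator $\mathcal{G}$, $\|u\|_{\mathcal G}^2:=\langle u,\mathcal G u\rangle$. Let $f_1:\mathbb{X}\to\mathbb{R}$ and $h_1:\mathbb{Y}\to\mathbb{R}$ be convex, continuously differentiable with globally Lipschitz continuous gradients, and $f_2:\mathbb{X}\to(-\infty,+\infty]$, $h_2:\mathbb{Y}\to(-\infty,+\infty]$ closed proper convex. Let $\mathcal{A}:\mathbb{Z}\to\mathbb{X}$, $\mathcal{B}:\mathbb{Z}\to\mathbb{Y}$ be linear with adjoints $\mathcal{A}^*,\mathcal{B}^*$, and $c\in\mathbb{Z}$. The problem is $\min\{f_1(x)+f_2(x)+h_1(y)+h_2(y):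 \mathcal{A}^*x+\mathcal{B}^*y=c\}$. Let $\Sigma_{f_1}\preceq\widehat\Sigma_{f_1}$ be self-adjoint positive semidefinite operators on $\mathbb{X}$ with $\tfrac12\|x-x'\|_{\Sigma_{f_1}}^2\le f_1(x)-f_1(x')-\langle x-x',\nabla f_1(x')\rangle\le\tfrac12\|x-x'\|_{\widehat\Sigma_{f_1}}^2$ for all $x,x'$, and likewise $\Sigma_{h_1}\preceq\widehat\Sigma_{h_1}$ on $\mathbb{Y}$ for $h_1$. Constraint qualification: there exists $(x^0,y^0)\in\operatorname{ri}(\operatorname{dom}f_2\times\operatorname{dom}h_2)$ with $\mathcal{A}^*x^0+\mathcal{B}^*y^0=c$. $\mathbb{W}^*$ denotes the set of $(\bar x,\bar y,\bar z)\in\mathbb{X}\times\mathbb{Y}\times\mathbb{Z}$ with $0\in\partial f_2(\bar x)+\nabla f_1(\bar x)+\mathcal{A}\bar z$, $0\in\partial h_2(\bar y)+\nabla h_1(\bar y)+\mathcal{B}\bar z$, $\mathcal{A}^*\bar x+\mathcal{B}^*\bar y=c$. Algorithm G-ADMM-M: choose $\sigma>0$, $\rho\in(0,2)$, self-adjoint positive semidefinite $\mathcal S$ on $\mathbb{X}$ and $\mathcal T$ on $\mathbb{Y}$ such that $\mathcal F:=\widehat\Sigma_{f_1}+\mathcal S+\sigma\mathcal{A}\mathcal{A}^*\succ0$ and $\mathcal H:=\widehat\Sigma_{h_1}+\mathcal T+\sigma\mathcal{B}\mathcal{B}^*\succ0$, and $\widetilde\omega^0=(\widetilde x^0,\widetilde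 y^0,\widetilde z^0)\in\operatorname{dom}f_2\times\operatorname{dom}h_2\times\mathbb{Z}$. For $k=0,1,2,\dots$: $x^k=\arg\min_x\{f_2(x)+\tfrac12\langle x,\mathcal F x\rangle+\langle\nabla f_1(\widetilde x^k)+\sigma\mathcal{A}(\mathcal{A}^*\widetilde x^k+\mathcal{B}^*\widetilde y^k-c+\sigma^{-1}\widetilde z^k)-\mathcal F\widetilde x^k,x\rangle\}$; $z^k=\widetilde z^k+\sigma(\mathcal{A}^*x^k+\mathcal{B}^*\widetilde y^k-c)$; $y^k=\arg\min_y\{h_2(y)+\tfrac12\langle y,\mathcal H y\rangle+\langle\nabla h_1(\widetilde y^k)+\sigma\mathcal{B}(\mathcal{A}^*x^k+\mathcal{B}^*\widetilde y^k-c+\sigma^{-1}z^k)-\mathcal H\widetilde y^k,y\rangle\}$; $\widetilde\omega^{k+1}=\widetilde\omega^k+\rho(\omega^k-\widetilde\omega^k)$ where $\omega^k=(x^k,y^k,z^k)$, $\widetilde\omega^k=(\widetilde x^k,\widetilde y^k,\widetilde z^k)$. *)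

theory Defs
  imports "HOL-Analysis.Analysis"
begin

definition edom :: "('a \<Rightarrow> ereal) \<Rightarrow> 'a set" where
  "edom f = {x. f x < \<infinity>}"

definition proper_fun :: "('a \<Rightarrow> ereal) \<Rightarrow> bool" where
  "proper_fun f \<longleftrightarrow> (\<forall>x. f x \<noteq> -\<infinity>) \<and> (\<exists>x. f x < \<infinity>)"

definition epigraph_e :: "('a \<Rightarrow> ereal) \<Rightarrow> ('a \<times> real) set" where
  "epigraph_e f = {(x, t). f x \<le> ereal t}"

definition closed_proper_convex :: "('a::real_normed_vector \<Rightarrow> ereal) \<Rightarrow> bool" where
  "closed_proper_convex f \<longleftrightarrow>
     proper_fun f \<and> convex (epigraph_e f) \<and> closed (epigraph_e f)"

definition subdiff :: "('a::real_inner \<Rightarrow> ereal) \<Rightarrow> 'a \<Rightarrow> 'a set" where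
  "subdiff f x = {g. f x < \<infinity> \<and> (\<forall>y. f x + ereal (inner g (y - x)) \<le> f y)}"

definition sa_psd :: "('a::real_inner \<Rightarrow> 'a) \<Rightarrow> bool" where
  "sa_psd G \<longleftrightarrow> linear G \<and> (\<forall>u v. inner (G u) v = inner u (G v)) \<and> (\<forall>u. 0 \<le> inner u (G u))"

definition pos_def :: "('a::real_inner \<Rightarrow> 'a) \<Rightarrow> bool" where
  "pos_def G \<longleftrightarrow> (\<forall>u. u \<noteq> 0 \<longrightarrow> 0 < inner u (G u))"

definition qnorm2 :: "('a::real_inner \<Rightarrow> 'a) \<Rightarrow> 'a \<Rightarrow> real" where
  "qnorm2 G u = inner u (G u)"

definition KKT_set ::
  "('x::euclidean_space \<Rightarrow> 'x) \<Rightarrow> ('x \<Rightarrow> ereal) \<Rightarrow> ('y::euclidean_space \<Rightarrow> 'y) \<Rightarrow> ('y \<Rightarrow> ereal)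
   \<Rightarrow> ('z::euclidean_space \<Rightarrow> 'x) \<Rightarrow> ('z \<Rightarrow> 'y) \<Rightarrow> 'z \<Rightarrow> ('x \<times> 'y \<times> 'z) set" where
  "KKT_set gf1 f2 gh1 h2 A B c =
     {(x, y, z). - (gf1 x + A z) \<in> subdiff f2 x \<and> - (gh1 y + B z) \<in> subdiff h2 y
        \<and> adjoint A x + adjoint B y = c}"

end

theory Submission
  imports Defs
begin

(* The optimality condition of the x-subproblem says that
   -(grad f1(xt^k) + (Sfh + S)(x^k - xt^k) + A z^k) is a subgradient of f2 at x^k.
   Monotonicity of the subdifferential at two consecutive iterates, the three-point
   inequality for grad f1 at xt^k, xt^(k+1) and xt^(k+1) - rho (x^(k+1) - x^k), and the
   multiplier increment z^(k+1) - z^k = sigma (rho r^k + A*(x^(k+1) - x^k)) combine into a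
   single scalar inequality; expanding the square of the new residual r^k + A*(x^(k+1) - x^k)
   and multiplying by (2 - rho)(2/rho) turns it into the claim. *)

lemma nonneg_if_nonneg_perturbation:
  fixes a c :: real
  assumes "\<And>t. 0 < t \<Longrightarrow> t < 1 \<Longrightarrow> 0 \<le> a + t * c"
  shows "0 \<le> a"
proof -
  have "((\<lambda>t. a + t * c) \<longlongrightarrow> a + 0 * c) (at_right 0)"
    by (intro tendsto_intros)
  moreover have "eventually (\<lambda>t. 0 \<le> a + t * c) (at_right (0::real))"
    using eventually_at_right_real[of 0 1] by (rule eventually_mono) (use assms in auto)
  ultimately show ?thesis
    by (intro tendsto_lowerbound) auto
qed

lemma epigraph_e_convex_combination:
  assumes "convex (epigraph_e f)" "f x = ereal fx" "f u = ereal fu" "0 \<le> t" "t \<le> 1"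
  shows "f ((1 - t) *\<^sub>R x + t *\<^sub>R u) \<le> ereal ((1 - t) * fx + t * fu)"
proof -
  have "(x, fx) \<in> epigraph_e f" "(u, fu) \<in> epigraph_e f"
    using assms(2,3) by (auto simp: epigraph_e_def)
  then have "(1 - t) *\<^sub>R (x, fx) + t *\<^sub>R (u, fu) \<in> epigraph_e f"
    using assms(1,4,5) by (intro convexD) auto
  then show ?thesis by (simp add: epigraph_e_def)
qed

lemma arg_min_plus_real_finite:
  assumes "proper_fun f" "is_arg_min (\<lambda>u. f u + ereal (q u)) (\<lambda>_. True) x"
  obtains r where "f x = ereal r"
proof -
  obtain x0 where x0: "f x0 < \<infinity>" and not_minf: "\<And>w. f w \<noteq> -\<infinity>"
    using assms(1) unfolding proper_fun_def by blast
  have "f x + ereal (q x) \<le> f x0 + ereal (q x0)"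
    using assms(2) unfolding is_arg_min_def by (metis not_le)
  also have "\<dots> < \<infinity>" using x0 by simp
  finally have "f x \<noteq> \<infinity>" by auto
  then show thesis
    using not_minf[of x] that by (cases "f x") auto
qed

lemma arg_min_quadratic_subgradient:
  fixes f :: "'a::real_inner \<Rightarrow> ereal"
  assumes proper: "proper_fun f" and cvx: "convex (epigraph_e f)"
    and F_lin: "linear F" and F_sym: "\<And>u v. inner (F u) v = inner u (F v)"
    and min: "is_arg_min (\<lambda>u. f u + ereal ((1/2) * inner u (F u) + inner b u)) (\<lambda>_. True) x"
  shows "- (F x + b) \<in> subdiff f x"
proof -
  define q where "q w = (1/2) * inner w (F w) + inner b w" for w
  have le_min: "f x + ereal (q x) \<le> f w + ereal (q w)" for w
    using min unfolding is_arg_min_def q_def by (metis not_le)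
  obtain fx where fx: "f x = ereal fx"
    using arg_min_plus_real_finite[OF proper min] .
  have "f x + ereal (inner (- (F x + b)) (u - x)) \<le> f u" for u
  proof (cases "f u")
    case (real fu)
    define d where "d = u - x"
    have q_line: "q (x + t *\<^sub>R d) = q x + t * inner (F x + b) d + t\<^sup>2 / 2 * inner d (F d)" for t
      using F_sym[of x d]
      by (simp add: q_def linear_add[OF F_lin] linear_scale[OF F_lin] inner_add_left inner_add_right
          algebra_simps power2_eq_square inner_commute)
    have "0 \<le> (fu - fx + inner (F x + b) d) + t * (inner d (F d) / 2)" if t: "0 < t" "t < 1" for t
    proof -
      have "(1 - t) *\<^sub>R x + t *\<^sub>R u = x + t *\<^sub>R d" by (simp add: d_def algebra_simps)
      then have "f (x + t *\<^sub>R d) \<le> ereal ((1 - t) * fx + t * fu)"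
        using epigraph_e_convex_combination[OF cvx fx real, of t] t by simp
      then have "f (x + t *\<^sub>R d) + ereal (q (x + t *\<^sub>R d))
          \<le> ereal ((1 - t) * fx + t * fu) + ereal (q (x + t *\<^sub>R d))"
        by (rule add_right_mono)
      with le_min[of "x + t *\<^sub>R d"]
      have "ereal (fx + q x) \<le> ereal ((1 - t) * fx + t * fu + q (x + t *\<^sub>R d))"
        using fx by (simp del: ereal_less_eq)
      then have "fx + q x \<le> (1 - t) * fx + t * fu + q (x + t *\<^sub>R d)"
        by simp
      then have "0 \<le> t * ((fu - fx + inner (F x + b) d) + t * (inner d (F d) / 2))"
        unfolding q_line by (simp add: algebra_simps power2_eq_square)
      then show ?thesis using t by (simp add: zero_le_mult_iff)
    qed
    then have "0 \<le> fu - fx + inner (F x + b) d" by (rule nonneg_if_nonneg_perturbation)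
    then show ?thesis using real fx unfolding inner_minus_left d_def by simp
  qed (use proper in \<open>auto simp: proper_fun_def\<close>)
  then show ?thesis
    using fx by (simp add: subdiff_def)
qed

lemma subdiff_monotone:
  assumes "proper_fun f" "p \<in> subdiff f x" "q \<in> subdiff f y"
  shows "0 \<le> inner (p - q) (x - y)"
proof -
  have "f x < \<infinity>" "f y < \<infinity>" "f x \<noteq> -\<infinity>" "f y \<noteq> -\<infinity>"
    using assms by (simp_all add: subdiff_def proper_fun_def)
  then obtain a b where a: "f x = ereal a" and b: "f y = ereal b"
    by (cases "f x"; cases "f y") auto
  have "f x + ereal (inner p (y - x)) \<le> f y" "f y + ereal (inner q (x - y)) \<le> f x"
    using assms(2,3) by (simp_all add: subdiff_def)
  then have "a + inner p (y - x) \<le> b" "b + inner q (x - y) \<le> a"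
    using a b by simp_all
  then show ?thesis
    by (simp add: inner_diff_left inner_diff_right)
qed

lemma gradient_three_point_ineq:
  fixes f :: "'a::real_inner \<Rightarrow> real"
  assumes bounds: "\<And>u v. (1/2) * qnorm2 Sf (u - v) \<le> f u - f v - inner (u - v) (g v)
                         \<and> f u - f v - inner (u - v) (g v) \<le> (1/2) * qnorm2 Sh (u - v)"
    and Sf_nonneg: "\<And>u. 0 \<le> qnorm2 Sf u"
  shows "- (1/2) * qnorm2 Sh (s - q) \<le> inner (g p - g q) (p - s)"
proof -
  have "f s - f q - inner (s - q) (g q) \<le> (1/2) * qnorm2 Sh (s - q)"
    "0 \<le> f s - f p - inner (s - p) (g p)" "0 \<le> f p - f q - inner (p - q) (g q)"
    using bounds[of s q] bounds[of s p] Sf_nonneg[of "s - p"] bounds[of p q] Sf_nonneg[of "p - q"]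
    by linarith+
  moreover have "inner (g p - g q) (p - s)
      = inner (s - q) (g q) - inner (s - p) (g p) - inner (p - q) (g q)"
    by (simp add: inner_diff_left inner_diff_right inner_commute[of "g p"] inner_commute[of "g q"])
  ultimately show ?thesis by linarith
qed

lemma sa_psd_add: "sa_psd P \<Longrightarrow> sa_psd Q \<Longrightarrow> sa_psd (\<lambda>u. P u + Q u)"
  unfolding sa_psd_def by (simp add: linear_compose_add inner_add_left inner_add_right)

lemma inner_gram:
  fixes A :: "'z::euclidean_space \<Rightarrow> 'x::euclidean_space"
  assumes "linear A"
  shows "inner (A (adjoint A u)) v = inner (adjoint A u) (adjoint A v)"
    and "inner v (A (adjoint A u)) = inner (adjoint A v) (adjoint A u)"
  using adjoint_works[OF assms, of "adjoint A u" v] by (simp_all add: inner_commute)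

lemma sa_psd_scaled_gram:
  fixes A :: "'z::euclidean_space \<Rightarrow> 'x::euclidean_space"
  assumes "linear A" "0 \<le> \<sigma>"
  shows "sa_psd (\<lambda>u. \<sigma> *\<^sub>R A (adjoint A u))"
proof -
  have "linear (\<lambda>u. A (adjoint A u))"
    using linear_compose[OF adjoint_linear[OF assms(1)] assms(1)] by (simp add: o_def)
  then show ?thesis
    using assms
    by (simp add: sa_psd_def linear_compose_scale_right inner_gram)
qed

lemma qnorm2_add_scaled_gram:
  fixes A :: "'z::euclidean_space \<Rightarrow> 'x::euclidean_space"
  assumes "linear A"
  shows "qnorm2 (\<lambda>u. G u + \<sigma> *\<^sub>R A (adjoint A u)) v = qnorm2 G v + \<sigma> * (norm (adjoint A v))\<^sup>2"
  using assms
  by (simp add: qnorm2_def inner_add_right inner_gram power2_norm_eq_inner)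

lemma qnorm2_scaleR: "linear G \<Longrightarrow> qnorm2 G (r *\<^sub>R u) = r\<^sup>2 * qnorm2 G u"
  by (simp add: qnorm2_def linear_scale power2_eq_square)

lemma qnorm2_diff_commute: "linear G \<Longrightarrow> qnorm2 G (u - v) = qnorm2 G (v - u)"
  using linear_neg[of G "u - v"] by (simp add: qnorm2_def inner_diff_left)

lemma qnorm2_diff:
  assumes "sa_psd G"
  shows "qnorm2 G (u - v) = qnorm2 G u - 2 * inner (G u) v + qnorm2 G v"
  using assms
  by (simp add: sa_psd_def qnorm2_def linear_diff inner_diff_left inner_diff_right inner_commute)

lemma residual_descent_of_estimate:
  fixes r d :: "'a::real_inner"
  assumes "0 < \<rho>" "\<rho> < 2"
    and "(1 - \<rho>/2) * gD - (\<rho>/2) * ga + \<sigma> * \<rho> * inner r d + \<sigma> * (norm d)\<^sup>2 \<le> 0"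
  shows "\<sigma> * (2 - \<rho>) * (norm (r + d))\<^sup>2 + (2 - \<rho>)\<^sup>2 / \<rho> * (gD + \<sigma> * (norm d)\<^sup>2)
      - (2 - \<rho>) * ga \<le> \<sigma> * (2 - \<rho>) * (norm r)\<^sup>2"
proof -
  define E where "E = (1 - \<rho>/2) * gD - (\<rho>/2) * ga + \<sigma> * \<rho> * inner r d + \<sigma> * (norm d)\<^sup>2"
  have "(norm (r + d))\<^sup>2 = (norm r)\<^sup>2 + 2 * inner r d + (norm d)\<^sup>2"
    by (simp add: power2_norm_eq_inner inner_add_left inner_add_right inner_commute)
  then have "\<sigma> * (2 - \<rho>) * (norm (r + d))\<^sup>2 + (2 - \<rho>)\<^sup>2 / \<rho> * (gD + \<sigma> * (norm d)\<^sup>2)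
      - (2 - \<rho>) * ga - \<sigma> * (2 - \<rho>) * (norm r)\<^sup>2 = (2 - \<rho>) * (2 / \<rho>) * E"
    using assms(1) by (simp add: E_def field_simps power2_eq_square)
  moreover have "(2 - \<rho>) * (2 / \<rho>) * E \<le> 0"
    using assms by (intro mult_nonneg_nonpos) (auto simp: E_def)
  ultimately show ?thesis by linarith
qed

lemma gadmm_x_update_subgradient:
  fixes A :: "'z::euclidean_space \<Rightarrow> 'x::euclidean_space" and f2 :: "'x \<Rightarrow> ereal"
  assumes "proper_fun f2" "convex (epigraph_e f2)" and A_lin: "linear A"
    and G_psd: "sa_psd G" and "0 < \<sigma>"
    and min: "is_arg_min (\<lambda>u. f2 u + ereal ((1/2) * inner u (G u + \<sigma> *\<^sub>R A (adjoint A u))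
           + inner (g + \<sigma> *\<^sub>R A (adjoint A xt + w - c + (1/\<sigma>) *\<^sub>R zt)
                    - (G xt + \<sigma> *\<^sub>R A (adjoint A xt))) u)) (\<lambda>_. True) x"
    and z: "z = zt + \<sigma> *\<^sub>R (adjoint A x + w - c)"
  shows "- (g + G (x - xt) + A z) \<in> subdiff f2 x"
proof -
  define F where "F u = G u + \<sigma> *\<^sub>R A (adjoint A u)" for u
  have "sa_psd F"
    unfolding F_def using sa_psd_add[OF G_psd sa_psd_scaled_gram[OF A_lin]] \<open>0 < \<sigma>\<close> by simp
  then have "- (F x + (g + \<sigma> *\<^sub>R A (adjoint A xt + w - c + (1/\<sigma>) *\<^sub>R zt)
                    - (G xt + \<sigma> *\<^sub>R A (adjoint A xt)))) \<in> subdiff f2 x"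
    using assms(1,2) min unfolding F_def[symmetric] sa_psd_def
    by (intro arg_min_quadratic_subgradient) auto
  moreover have "F x + (g + \<sigma> *\<^sub>R A (adjoint A xt + w - c + (1/\<sigma>) *\<^sub>R zt)
                    - (G xt + \<sigma> *\<^sub>R A (adjoint A xt))) = g + G (x - xt) + A z"
    using \<open>0 < \<sigma>\<close> G_psd
    by (simp add: F_def z sa_psd_def linear_add[OF A_lin] linear_diff[OF A_lin] linear_scale[OF A_lin]
        linear_diff[of G] scaleR_add_right scaleR_diff_right algebra_simps)
  ultimately show ?thesis by simp
qed

lemma gadmm_multiplier_increment:
  fixes A :: "'z::euclidean_space \<Rightarrow> 'x::euclidean_space" and B :: "'z \<Rightarrow> 'y::euclidean_space"
  assumes "linear A" "linear B"
    and "z0 = zt0 + \<sigma> *\<^sub>R (adjoint A x0 + adjoint B yt0 - c)"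
    and "z1 = zt1 + \<sigma> *\<^sub>R (adjoint A x1 + adjoint B yt1 - c)"
    and "yt1 = yt0 + \<rho> *\<^sub>R (y0 - yt0)" and "zt1 = zt0 + \<rho> *\<^sub>R (z0 - zt0)"
  shows "z1 - z0 = \<sigma> *\<^sub>R (\<rho> *\<^sub>R (adjoint A x0 + adjoint B y0 - c) + adjoint A (x1 - x0))"
  unfolding assms(4) assms(5,6) assms(3)
  using adjoint_linear[OF assms(1)] adjoint_linear[OF assms(2)]
  by (simp add: linear_add linear_diff linear_scale algebra_simps)

lemma relaxed_gradient_increment_bound:
  fixes g :: "'a::real_inner \<Rightarrow> 'a"
  assumes bounds: "\<And>u v. (1/2) * qnorm2 Sf (u - v) \<le> f u - f v - inner (u - v) (g v)
                         \<and> f u - f v - inner (u - v) (g v) \<le> (1/2) * qnorm2 Sh (u - v)"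
    and "\<And>u. 0 \<le> qnorm2 Sf u" and "linear Sh" and "0 < \<rho>"
    and xt1: "xt1 = xt0 + \<rho> *\<^sub>R (x0 - xt0)"
  shows "- (\<rho>/2) * qnorm2 Sh ((x0 - xt0) - D) \<le> inner (g xt1 - g xt0) D"
proof -
  have "(xt1 - \<rho> *\<^sub>R D) - xt0 = \<rho> *\<^sub>R ((x0 - xt0) - D)" "xt1 - (xt1 - \<rho> *\<^sub>R D) = \<rho> *\<^sub>R D"
    using xt1 by (simp_all add: algebra_simps)
  with gradient_three_point_ineq[OF bounds, of "xt1 - \<rho> *\<^sub>R D" xt0 xt1]
  have "- (1/2) * qnorm2 Sh (\<rho> *\<^sub>R ((x0 - xt0) - D)) \<le> inner (g xt1 - g xt0) (\<rho> *\<^sub>R D)"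
    using assms(2) by simp
  then have "\<rho> * (- (\<rho>/2) * qnorm2 Sh ((x0 - xt0) - D)) \<le> \<rho> * inner (g xt1 - g xt0) D"
    unfolding qnorm2_scaleR[OF \<open>linear Sh\<close>] inner_scaleR_right
    by (simp add: power2_eq_square algebra_simps)
  then show ?thesis
    using \<open>0 < \<rho>\<close> by (simp only: mult_le_cancel_left_pos)
qed

lemma gadmm_x_descent_estimate:
  fixes gf1 :: "'x::euclidean_space \<Rightarrow> 'x" and A :: "'z::euclidean_space \<Rightarrow> 'x"
  assumes "proper_fun f2"
    and bounds: "\<And>u v. (1/2) * qnorm2 Sf (u - v) \<le> f1 u - f1 v - inner (u - v) (gf1 v)
                         \<and> f1 u - f1 v - inner (u - v) (gf1 v) \<le> (1/2) * qnorm2 Sfh (u - v)"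
    and "\<And>u. 0 \<le> qnorm2 Sf u" and "linear Sfh"
    and G_psd: "sa_psd G" and Sfh_le_G: "\<And>u. qnorm2 Sfh u \<le> qnorm2 G u"
    and A_lin: "linear A" and "0 < \<rho>"
    and sub0: "- (gf1 xt0 + G (x0 - xt0) + A z0) \<in> subdiff f2 x0"
    and sub1: "- (gf1 xt1 + G (x1 - xt1) + A z1) \<in> subdiff f2 x1"
    and xt1: "xt1 = xt0 + \<rho> *\<^sub>R (x0 - xt0)"
    and dz: "z1 - z0 = \<sigma> *\<^sub>R (\<rho> *\<^sub>R r + adjoint A (x1 - x0))"
  shows "(1 - \<rho>/2) * qnorm2 G (x1 - x0) - (\<rho>/2) * qnorm2 G (x0 - xt0)
          + \<sigma> * \<rho> * inner r (adjoint A (x1 - x0)) + \<sigma> * (norm (adjoint A (x1 - x0)))\<^sup>2 \<le> 0"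
proof -
  define D where "D = x1 - x0"
  define a where "a = x0 - xt0"
  define d where "d = adjoint A D"
  have G_lin: "linear G"
    using G_psd by (simp add: sa_psd_def)
  have "inner ((gf1 xt1 - gf1 xt0) + (G (x1 - xt1) - G a) + A (z1 - z0)) D \<le> 0"
    using subdiff_monotone[OF \<open>proper_fun f2\<close> sub0 sub1]
    by (simp add: a_def D_def linear_diff[OF A_lin] inner_diff_left inner_diff_right algebra_simps)
  moreover have "inner (G (x1 - xt1) - G a) D = qnorm2 G D - \<rho> * inner (G a) D"
  proof -
    have "x1 - xt1 = D + (1 - \<rho>) *\<^sub>R a" by (simp add: xt1 D_def a_def algebra_simps)
    then have Gx1: "G (x1 - xt1) = G D + (1 - \<rho>) *\<^sub>R G a"
      by (simp add: linear_add[OF G_lin] linear_scale[OF G_lin])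
    show ?thesis
      unfolding Gx1
      by (simp add: qnorm2_def inner_add_left inner_diff_left inner_commute[of _ D] algebra_simps)
  qed
  moreover have "inner (A (z1 - z0)) D = \<sigma> * (\<rho> * inner r d + (norm d)\<^sup>2)"
  proof -
    have "inner (A (z1 - z0)) D = inner (z1 - z0) d"
      by (simp add: d_def adjoint_works[OF A_lin])
    then show ?thesis
      unfolding dz D_def[symmetric] d_def[symmetric]
      by (simp add: inner_add_left power2_norm_eq_inner)
  qed
  moreover have "- (\<rho>/2) * qnorm2 G (a - D) \<le> inner (gf1 xt1 - gf1 xt0) D"
  proof -
    have "- (\<rho>/2) * qnorm2 G (a - D) \<le> - (\<rho>/2) * qnorm2 Sfh (a - D)"
      using Sfh_le_G[of "a - D"] \<open>0 < \<rho>\<close> by simp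
    also have "\<dots> \<le> inner (gf1 xt1 - gf1 xt0) D"
      unfolding a_def by (rule relaxed_gradient_increment_bound[OF bounds]) (use assms in auto)
    finally show ?thesis .
  qed
  moreover have "qnorm2 G (a - D) = qnorm2 G a - 2 * inner (G a) D + qnorm2 G D"
    by (rule qnorm2_diff[OF G_psd])
  ultimately show ?thesis
    unfolding D_def[symmetric] a_def[symmetric] d_def[symmetric]
    by (simp add: inner_add_left algebra_simps)
qed

(* Only the x-update, the multiplier update, the relaxation step, the bounds on f1 and the
   convexity of f2 enter the estimate. *)
theorem lemma6:
  fixes f1 :: "'x::euclidean_space \<Rightarrow> real" and gf1 :: "'x \<Rightarrow> 'x" and f2 :: "'x \<Rightarrow> ereal"
    and h1 :: "'y::euclidean_space \<Rightarrow> real" and gh1 :: "'y \<Rightarrow> 'y" and h2 :: "'y \<Rightarrow> ereal"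
    and A :: "'z::euclidean_space \<Rightarrow> 'x" and B :: "'z \<Rightarrow> 'y" and c :: 'z
    and Sf Sfh S :: "'x \<Rightarrow> 'x" and Sh Shh T :: "'y \<Rightarrow> 'y"
    and \<sigma> \<rho> :: real
    and x xt :: "nat \<Rightarrow> 'x" and y yt :: "nat \<Rightarrow> 'y" and z zt :: "nat \<Rightarrow> 'z"
    and xb :: 'x and yb :: 'y and zb :: 'z
  assumes f1_cvx: "convex_on UNIV f1"
    and f1_grad: "\<And>u. (f1 has_derivative (\<lambda>h. inner (gf1 u) h)) (at u)"
    and f1_lip: "\<exists>L. \<forall>u v. norm (gf1 u - gf1 v) \<le> L * norm (u - v)"
    and h1_cvx: "convex_on UNIV h1"
    and h1_grad: "\<And>u. (h1 has_derivative (\<lambda>h. inner (gh1 u) h)) (at u)"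
    and h1_lip: "\<exists>L. \<forall>u v. norm (gh1 u - gh1 v) \<le> L * norm (u - v)"
    and f2_cpc: "closed_proper_convex f2"
    and h2_cpc: "closed_proper_convex h2"
    and A_lin: "linear A" and B_lin: "linear B"
    and Sf_psd: "sa_psd Sf" and Sfh_psd: "sa_psd Sfh" and Sf_le: "\<And>u. qnorm2 Sf u \<le> qnorm2 Sfh u"
    and f1_bounds: "\<And>u v. (1/2) * qnorm2 Sf (u - v) \<le> f1 u - f1 v - inner (u - v) (gf1 v)
                         \<and> f1 u - f1 v - inner (u - v) (gf1 v) \<le> (1/2) * qnorm2 Sfh (u - v)"
    and Sh_psd: "sa_psd Sh" and Shh_psd: "sa_psd Shh" and Sh_le: "\<And>u. qnorm2 Sh u \<le> qnorm2 Shh u"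
    and h1_bounds: "\<And>u v. (1/2) * qnorm2 Sh (u - v) \<le> h1 u - h1 v - inner (u - v) (gh1 v)
                         \<and> h1 u - h1 v - inner (u - v) (gh1 v) \<le> (1/2) * qnorm2 Shh (u - v)"
    and CQ: "\<exists>x0 y0. (x0, y0) \<in> rel_interior (edom f2 \<times> edom h2) \<and> adjoint A x0 + adjoint B y0 = c"
    and sigma_pos: "\<sigma> > 0" and rho_pos: "0 < \<rho>" and rho_lt: "\<rho> < 2"
    and S_psd: "sa_psd S" and T_psd: "sa_psd T"
    and F_pd: "pos_def (\<lambda>u. Sfh u + S u + \<sigma> *\<^sub>R A (adjoint A u))"
    and H_pd: "pos_def (\<lambda>u. Shh u + T u + \<sigma> *\<^sub>R B (adjoint B u))"
    and init: "xt 0 \<in> edom f2" "yt 0 \<in> edom h2"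
    and x_step: "\<And>k. is_arg_min
        (\<lambda>u. f2 u + ereal ((1/2) * inner u (Sfh u + S u + \<sigma> *\<^sub>R A (adjoint A u))
           + inner (gf1 (xt k) + \<sigma> *\<^sub>R A (adjoint A (xt k) + adjoint B (yt k) - c + (1/\<sigma>) *\<^sub>R zt k)
                    - (Sfh (xt k) + S (xt k) + \<sigma> *\<^sub>R A (adjoint A (xt k)))) u))
        (\<lambda>_. True) (x k)"
    and z_step: "\<And>k. z k = zt k + \<sigma> *\<^sub>R (adjoint A (x k) + adjoint B (yt k) - c)"
    and y_step: "\<And>k. is_arg_min
        (\<lambda>v. h2 v + ereal ((1/2) * inner v (Shh v + T v + \<sigma> *\<^sub>R B (adjoint B v))
           + inner (gh1 (yt k) + \<sigma> *\<^sub>R B (adjoint A (x k) + adjoint B (yt k) - c + (1/\<sigma>) *\<^sub>R z k)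
                    - (Shh (yt k) + T (yt k) + \<sigma> *\<^sub>R B (adjoint B (yt k)))) v))
        (\<lambda>_. True) (y k)"
    and relax: "\<And>k. xt (Suc k) = xt k + \<rho> *\<^sub>R (x k - xt k)"
               "\<And>k. yt (Suc k) = yt k + \<rho> *\<^sub>R (y k - yt k)"
               "\<And>k. zt (Suc k) = zt k + \<rho> *\<^sub>R (z k - zt k)"
    and sol: "(xb, yb, zb) \<in> KKT_set gf1 f2 gh1 h2 A B c"
    and k_gt: "(k::nat) > 1"
  shows "\<sigma> * (2 - \<rho>) * (norm (adjoint A (x k) + adjoint B (y k) - c))\<^sup>2
       \<ge> \<sigma> * (2 - \<rho>) * (norm (adjoint A (x (Suc k)) + adjoint B (y k) - c))\<^sup>2
         + (2 - \<rho>)\<^sup>2 / \<rho> * qnorm2 (\<lambda>u. Sfh u + S u + \<sigma> *\<^sub>R A (adjoint A u)) (x (Suc k) - x k)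
         - (2 - \<rho>) * qnorm2 (\<lambda>u. Sfh u + S u) (xt k - x k)"
proof -
  let ?G = "\<lambda>u. Sfh u + S u"
  let ?r = "adjoint A (x k) + adjoint B (y k) - c"
  have G_psd: "sa_psd ?G" by (rule sa_psd_add[OF Sfh_psd S_psd])
  have Sfh_le_G: "qnorm2 Sfh u \<le> qnorm2 ?G u" for u
    using S_psd by (simp add: qnorm2_def sa_psd_def inner_add_right)
  have Sf_nonneg: "0 \<le> qnorm2 Sf u" for u
    using Sf_psd by (simp add: qnorm2_def sa_psd_def)
  have Sfh_lin: "linear Sfh"
    using Sfh_psd by (simp add: sa_psd_def)
  have f2: "proper_fun f2" "convex (epigraph_e f2)"
    using f2_cpc by (simp_all add: closed_proper_convex_def)
  have sub: "- (gf1 (xt j) + ?G (x j - xt j) + A (z j)) \<in> subdiff f2 (x j)" for j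
    by (rule gadmm_x_update_subgradient[OF f2 A_lin G_psd sigma_pos x_step z_step])
  have dz: "z (Suc k) - z k = \<sigma> *\<^sub>R (\<rho> *\<^sub>R ?r + adjoint A (x (Suc k) - x k))"
    by (rule gadmm_multiplier_increment[OF A_lin B_lin z_step z_step relax(2,3)])
  have est: "(1 - \<rho>/2) * qnorm2 ?G (x (Suc k) - x k) - (\<rho>/2) * qnorm2 ?G (x k - xt k)
          + \<sigma> * \<rho> * inner ?r (adjoint A (x (Suc k) - x k))
          + \<sigma> * (norm (adjoint A (x (Suc k) - x k)))\<^sup>2 \<le> 0"
    by (rule gadmm_x_descent_estimate[OF f2(1) f1_bounds Sf_nonneg Sfh_lin G_psd Sfh_le_G A_lin
          rho_pos sub sub relax(1) dz])
  have res: "adjoint A (x (Suc k)) + adjoint B (y k) - c = ?r + adjoint A (x (Suc k) - x k)"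
    using adjoint_linear[OF A_lin] by (simp add: linear_diff)
  have qG: "qnorm2 ?G (xt k - x k) = qnorm2 ?G (x k - xt k)"
    using G_psd by (simp add: qnorm2_diff_commute sa_psd_def)
  show ?thesis
    unfolding res qG qnorm2_add_scaled_gram[OF A_lin]
    by (rule residual_descent_of_estimate[OF rho_pos rho_lt est])
qed

end
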